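(* The action of $\mathrm{PSL}(2,\mathbb{R})$ on $D$ by biholomorphisms induces an isomorphism $\mathcal D:\mathfrak{psl}(2,\mathbb{R})\to\ker\bar\partial_2$, and $\mathcal D$ is orientation-reversing.
   Context: $D$ is the closed unit disk. $F^2\subset\underline{\mathbb{C}}|_{\partial D}$ is the totally real line subbundle with fibres $F^2_z=z\mathbb{R}$, oriented by the frame $z$ (with the induced spin structure); $\bar\partial_2$ is the Cauchy–Riemann operator on sections of $\underline{\mathbb{C}}\to D$ with boundary values in $F^2$ (identified with $(TD,T\partial D)$), with vanishing cokernel, and $\ker\bar\partial_2$ is oriented by the canonical orientation of the determinant line of a spin Riemann–Hilbert pair (Fukaya–Oh–Ohta–Ono / Solomon convention; for rank one pairs of Maslov index $2$, evaluation at an interior point and at a boundary point, $\ker\to E_0\oplus F_1$, is orientation-preserving for the complex orientation on $E_0$). $\mathcal D(A)$ is the vector field $z\mapsto\frac{d}{dt}|_{t=0}\exp(tA)\cdot z$. $\mathrm{PSL}(2,\mathbb{R})$ is oriented so that, for three distinct points $z_0,z_1,z_2\in\partial D$ in anticlockwise order, the embedding $g\mapsto(g z_0,g z_1,g z_2)\in(\partial D)^3$ is orientation-reversing, $\partial D$ being oriented counterclockwise. *)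

theory Defs
  imports "HOL-Analysis.Analysis"
begin

type_synonym mat2 = "real^2^2"

definition psl2 :: "mat2 set" where
  "psl2 = {A. trace A = 0}"

fun mpow :: "mat2 \<Rightarrow> nat \<Rightarrow> mat2" where
  "mpow A 0 = mat 1"
| "mpow A (Suc n) = A ** mpow A n"

definition mexp :: "mat2 \<Rightarrow> mat2" where
  "mexp A = (\<Sum>n. (1 / fact n) *\<^sub>R mpow A n)"

text \<open>A real matrix g = [[a,b],[c,d]] acts on the upper half plane by Moebius
 transformations; transported to the disk by the Cayley transform w -> (w - i)/(w + i)
 it acts by the Moebius transformation of the complex matrix C g adj(C),
 C = [[1,-i],[1,i]].\<close>

definition disk_act :: "mat2 \<Rightarrow> complex \<Rightarrow> complex" where
  "disk_act g z =
    (let a = complex_of_real (g$1$1); b = complex_of_real (g$1$2);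
         c = complex_of_real (g$2$1); d = complex_of_real (g$2$2);
         m11 = \<i>*a + c - b + \<i>*d; m12 = \<i>*a + c + b - \<i>*d;
         m21 = \<i>*a - c - b - \<i>*d; m22 = \<i>*a - c + b + \<i>*d
     in (m11 * z + m12) / (m21 * z + m22))"

definition infact :: "mat2 \<Rightarrow> complex \<Rightarrow> complex" where
  "infact A z = vector_derivative (\<lambda>t. disk_act (mexp (t *\<^sub>R A)) z) (at 0)"

text \<open>Sections of the trivial line bundle over the closed unit disk, holomorphic in
 the interior, continuous up to the boundary, with boundary values in F^2_z = z R.\<close>

definition ker_dbar2 :: "(complex \<Rightarrow> complex) set" where
  "ker_dbar2 = {\<xi>. continuous_on (cball 0 1) \<xi> \<and> \<xi> holomorphic_on ball 0 1 \<and>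
                   (\<forall>z. cmod z = 1 \<longrightarrow> \<xi> z / z \<in> \<real>)}"

text \<open>Identification of (TD, T dD) (T dD oriented counterclockwise, frame i z) with
 (C, F^2) (F^2 oriented by the frame z): multiplication by -i.\<close>

definition tangent_to_F2 :: "(complex \<Rightarrow> complex) \<Rightarrow> (complex \<Rightarrow> complex)" where
  "tangent_to_F2 v = (\<lambda>z. - \<i> * v z)"

definition DD :: "mat2 \<Rightarrow> (complex \<Rightarrow> complex)" where
  "DD A = tangent_to_F2 (infact A)"

definition det3 :: "(nat \<Rightarrow> nat \<Rightarrow> real) \<Rightarrow> real" where
  "det3 M = M 0 0 * (M 1 1 * M 2 2 - M 1 2 * M 2 1)
          - M 0 1 * (M 1 0 * M 2 2 - M 1 2 * M 2 0)
          + M 0 2 * (M 1 0 * M 2 1 - M 1 1 * M 2 0)"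

definition anticlockwise3 :: "complex \<Rightarrow> complex \<Rightarrow> complex \<Rightarrow> bool" where
  "anticlockwise3 z0 z1 z2 \<longleftrightarrow> (\<exists>\<theta> s1 s2. 0 < s1 \<and> s1 < s2 \<and> s2 < 2 * pi \<and>
       z0 = cis \<theta> \<and> z1 = cis (\<theta> + s1) \<and> z2 = cis (\<theta> + s2))"

text \<open>Orientation of psl(2,R) = T_e PSL(2,R): (A0,A1,A2) is a positive basis iff its image
 under the differential at e of g -> (g z0, g z1, g z2) is a negative basis of
 T(dD)^3, each T_{z_k} dD oriented counterclockwise (coordinate: coefficient of i z_k).\<close>

definition psl_pos :: "complex \<Rightarrow> complex \<Rightarrow> complex \<Rightarrow> mat2 \<Rightarrow> mat2 \<Rightarrow> mat2 \<Rightarrow> bool" where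
  "psl_pos z0 z1 z2 A0 A1 A2 \<longleftrightarrow>
     (let z = (\<lambda>k::nat. if k = 0 then z0 else if k = 1 then z1 else z2);
          A = (\<lambda>j::nat. if j = 0 then A0 else if j = 1 then A1 else A2)
      in det3 (\<lambda>k j. Im (infact (A j) (z k) / z k)) < 0)"

text \<open>Canonical orientation of ker dbar_2: evaluation at an interior point p and a boundary
 point q, ker -> C + F^2_q, is orientation preserving (complex orientation on C,
 F^2_q = q R oriented by q).\<close>

definition ker_pos :: "complex \<Rightarrow> complex \<Rightarrow> (complex \<Rightarrow> complex) \<Rightarrow> (complex \<Rightarrow> complex)
                        \<Rightarrow> (complex \<Rightarrow> complex) \<Rightarrow> bool" where
  "ker_pos p q \<xi>0 \<xi>1 \<xi>2 \<longleftrightarrow>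
     (let \<xi> = (\<lambda>j::nat. if j = 0 then \<xi>0 else if j = 1 then \<xi>1 else \<xi>2);
          row = (\<lambda>k j. if k = 0 then Re (\<xi> j p) else if k = 1 then Im (\<xi> j p)
                       else Re (\<xi> j q / q))
      in det3 row > 0)"

end

theory Submission
  imports Defs "HOL-Complex_Analysis.Conformal_Mappings"
begin

text \<open>
  Differentiating the Moebius action gives \<open>DD A z = c + r z + cnj c z\<^sup>2\<close>, where
  \<open>c \<in> \<complex>\<close> and \<open>r \<in> \<real>\<close> depend linearly on \<open>A\<close>, and on trace-free matrices
  \<open>A \<mapsto> (c, r)\<close> is a bijection onto \<open>\<complex> \<times> \<real>\<close>. Conversely, for \<open>\<xi>\<close> in the kernel,
  \<open>\<xi> - \<xi> 0 - cnj (\<xi> 0) z\<^sup>2\<close> vanishes at \<open>0\<close>; divided by \<open>z\<close> it is holomorphic on the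
  disc and real on the circle, hence a real constant by the maximum principle.

  In the coordinates \<open>(r, Re c, Im c)\<close>, the differential of \<open>g \<mapsto> (g z\<^sub>0, g z\<^sub>1, g z\<^sub>2)\<close>
  and the evaluation \<open>\<xi> \<mapsto> (\<xi> p, \<xi> q)\<close> are given by matrices with positive
  determinants: a multiple of the signed area of the triangle \<open>z\<^sub>0 z\<^sub>1 z\<^sub>2\<close>, and
  \<open>(1 - |p|\<^sup>2) |q - p|\<^sup>2\<close>. The first map reverses orientation by the choice of
  orientation of \<open>PSL(2,\<real>)\<close>, the second preserves it, so \<open>DD\<close> reverses orientation.
\<close>

lemma mpow_scaleR: "mpow (t *\<^sub>R A) n = t ^ n *\<^sub>R mpow A n"
  by (induct n) (simp_all add: matrix_scalar_ac scalar_matrix_assoc mult.commute)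

lemma abs_mpow_entry_le: "\<bar>mpow A n $ i $ j\<bar> \<le> (\<Sum>k\<in>UNIV. \<Sum>l\<in>UNIV. \<bar>A$k$l\<bar>) ^ n"
proof (induct n arbitrary: i j)
  case 0
  then show ?case by (simp add: mat_def)
next
  case (Suc n)
  let ?N = "\<Sum>k\<in>UNIV. \<Sum>l\<in>UNIV. \<bar>A$k$l\<bar>"
  have row: "(\<Sum>l\<in>UNIV. \<bar>A$i$l\<bar>) \<le> ?N"
    by (rule member_le_sum) (auto intro: sum_nonneg)
  have "\<bar>mpow A (Suc n) $ i $ j\<bar> \<le> (\<Sum>l\<in>UNIV. \<bar>A$i$l\<bar> * \<bar>mpow A n $ l $ j\<bar>)"
    by (simp add: matrix_matrix_mult_def sum_abs[THEN order_trans] abs_mult)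
  also have "\<dots> \<le> (\<Sum>l\<in>UNIV. \<bar>A$i$l\<bar>) * ?N ^ n"
    unfolding sum_distrib_right by (intro sum_mono mult_left_mono Suc) auto
  also have "\<dots> \<le> ?N ^ Suc n"
    using row by (simp add: mult_right_mono sum_nonneg)
  finally show ?case .
qed

lemma summable_mpow_entry_series: "summable (\<lambda>n. mpow A n $ i $ j / fact n * t ^ n)"
proof (rule summable_comparison_test'[OF summable_exp[of "\<bar>t\<bar> * (\<Sum>k\<in>UNIV. \<Sum>l\<in>UNIV. \<bar>A$k$l\<bar>)"]])
  fix n :: nat
  show "norm (mpow A n $ i $ j / fact n * t ^ n)
      \<le> inverse (fact n) * (\<bar>t\<bar> * (\<Sum>k\<in>UNIV. \<Sum>l\<in>UNIV. \<bar>A$k$l\<bar>)) ^ n"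
    using abs_mpow_entry_le[of A n i j]
    by (simp add: abs_mult power_abs power_mult_distrib divide_inverse mult_ac mult_left_mono)
qed

lemma summable_vecI:
  fixes f :: "nat \<Rightarrow> 'a::real_normed_vector ^ 'n"
  assumes "\<And>i. summable (\<lambda>n. f n $ i)"
  shows "summable f"
proof -
  have "((\<lambda>n. \<Sum>k<n. f k) \<longlonglongrightarrow> (\<chi> i. \<Sum>n. f n $ i))"
    by (rule vec_tendstoI) (use assms in \<open>simp add: summable_LIMSEQ\<close>)
  then show ?thesis
    unfolding summable_def sums_def by blast
qed

lemma mexp_scaleR_entry: "mexp (t *\<^sub>R A) $ i $ j = (\<Sum>n. mpow A n $ i $ j / fact n * t ^ n)"
proof -
  have entry: "(\<lambda>n. ((1 / fact n) *\<^sub>R mpow (t *\<^sub>R A) n) $ i $ j) = (\<lambda>n. mpow A n $ i $ j / fact n * t ^ n)"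
    for i j by (simp add: mpow_scaleR mult.commute)
  have "summable (\<lambda>n. (1 / fact n) *\<^sub>R mpow (t *\<^sub>R A) n)"
    by (intro summable_vecI, unfold entry) (rule summable_mpow_entry_series)
  then have "(\<lambda>n. (1 / fact n) *\<^sub>R mpow (t *\<^sub>R A) n) sums mexp (t *\<^sub>R A)"
    unfolding mexp_def by (rule summable_sums)
  then have "(\<lambda>n. mpow A n $ i $ j / fact n * t ^ n) sums mexp (t *\<^sub>R A) $ i $ j"
    unfolding entry[symmetric] by (intro sums_vec_nth)
  then show ?thesis
    by (rule sums_unique)
qed

lemma mexp_zero: "mexp 0 = mat 1"
proof -
  have "mexp (0 *\<^sub>R A) $ i $ j = mat 1 $ i $ j" for A :: mat2 and i j
    unfolding mexp_scaleR_entry powser_zero by simp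
  then show ?thesis
    by (simp add: vec_eq_iff)
qed

lemma has_real_derivative_mexp_entry:
  "((\<lambda>t. mexp (t *\<^sub>R A) $ i $ j) has_real_derivative A $ i $ j) (at 0)"
proof -
  have "((\<lambda>t. \<Sum>n. mpow A n $ i $ j / fact n * t ^ n) has_real_derivative
      (\<Sum>n. diffs (\<lambda>n. mpow A n $ i $ j / fact n) n * 0 ^ n)) (at 0)"
    by (rule termdiffs_strong_converges_everywhere[OF summable_mpow_entry_series])
  then show ?thesis
    unfolding powser_zero mexp_scaleR_entry by (simp add: diffs_def)
qed

lemma has_vector_derivative_quotient:
  fixes f g :: "real \<Rightarrow> 'a::real_normed_field"
  assumes f: "(f has_vector_derivative f') (at x)" and g: "(g has_vector_derivative g') (at x)"
    and gx: "g x \<noteq> 0"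
  shows "((\<lambda>t. f t / g t) has_vector_derivative (f' * g x - f x * g') / (g x)\<^sup>2) (at x)"
proof -
  have "((inverse \<circ> g) has_vector_derivative g' * - (inverse (g x) ^ 2)) (at x)"
    using field_vector_diff_chain_at[OF g DERIV_inverse[OF gx]]
    by (simp add: power2_eq_square)
  from has_vector_derivative_mult[OF f this[unfolded comp_def]] show ?thesis
    using gx by (simp add: divide_inverse power2_eq_square algebra_simps)
qed

definition kernel_field :: "complex \<Rightarrow> real \<Rightarrow> complex \<Rightarrow> complex" where
  "kernel_field c r z = c + of_real r * z + cnj c * z\<^sup>2"

definition DD_const :: "mat2 \<Rightarrow> complex" where
  "DD_const A = - (of_real (A$1$2 + A$2$1) + \<i> * of_real (A$1$1 - A$2$2)) / 2"

definition DD_rot :: "mat2 \<Rightarrow> real" where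
  "DD_rot A = A$1$2 - A$2$1"

lemma has_vector_derivative_disk_act:
  assumes g': "\<And>i j. ((\<lambda>t. g t $ i $ j) has_real_derivative G $ i $ j) (at 0)"
    and g0: "g 0 = mat 1"
  shows "((\<lambda>t. disk_act (g t) z) has_vector_derivative
    \<i> * kernel_field (DD_const G) (DD_rot G) z) (at 0)"
proof -
  define e where "e i j t = complex_of_real (g t $ i $ j)" for i j t
  define a b c d where "a = e 1 1" and "b = e 1 2" and "c = e 2 1" and "d = e 2 2"
  define a' b' c' d' where "a' = complex_of_real (G$1$1)" and "b' = complex_of_real (G$1$2)"
    and "c' = complex_of_real (G$2$1)" and "d' = complex_of_real (G$2$2)"
  define N where "N t = (\<i>*a t + c t - b t + \<i>*d t) * z + (\<i>*a t + c t + b t - \<i>*d t)" for t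
  define D where "D t = (\<i>*a t - c t - b t - \<i>*d t) * z + (\<i>*a t - c t + b t + \<i>*d t)" for t
  define N' D' where "N' = (\<i>*a' + c' - b' + \<i>*d') * z + (\<i>*a' + c' + b' - \<i>*d')"
    and "D' = (\<i>*a' - c' - b' - \<i>*d') * z + (\<i>*a' - c' + b' + \<i>*d')"
  have e': "(e i j has_vector_derivative of_real (G $ i $ j)) (at 0)" for i j
    unfolding e_def by (intro has_vector_derivative_of_real g')
  have "(N has_vector_derivative N') (at 0)" "(D has_vector_derivative D') (at 0)"
    unfolding N_def N'_def D_def D'_def a_def b_def c_def d_def a'_def b'_def c'_def d'_def
    by (intro has_vector_derivative_add has_vector_derivative_diff has_vector_derivative_mult_left
        has_vector_derivative_mult_right e')+
  moreover have N0: "N 0 = 2 * \<i> * z" and D0: "D 0 = 2 * \<i>"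
    by (simp_all add: N_def D_def a_def b_def c_def d_def e_def g0 mat_def)
  ultimately have "((\<lambda>t. N t / D t) has_vector_derivative (N' * D 0 - N 0 * D') / (D 0)\<^sup>2) (at 0)"
    by (intro has_vector_derivative_quotient) simp_all
  moreover have "(\<lambda>t. disk_act (g t) z) = (\<lambda>t. N t / D t)"
    by (simp add: fun_eq_iff disk_act_def Let_def N_def D_def a_def b_def c_def d_def e_def)
  moreover have "(N' * D 0 - N 0 * D') / (D 0)\<^sup>2 = \<i> * kernel_field (DD_const G) (DD_rot G) z"
    unfolding N0 D0 N'_def D'_def kernel_field_def DD_const_def DD_rot_def a'_def b'_def c'_def d'_def
    by (simp add: field_simps power2_eq_square)
  ultimately show ?thesis
    by simp
qed

lemma infact_eq_kernel_field: "infact A z = \<i> * kernel_field (DD_const A) (DD_rot A) z"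
  unfolding infact_def
  by (intro vector_derivative_at has_vector_derivative_disk_act has_real_derivative_mexp_entry)
    (simp add: mexp_zero)

lemma DD_eq_kernel_field: "DD A = kernel_field (DD_const A) (DD_rot A)"
  by (simp add: fun_eq_iff DD_def tangent_to_F2_def infact_eq_kernel_field)

lemma kernel_field_div_on_circle:
  assumes "cmod z = 1"
  shows "kernel_field c r z / z = of_real (r + 2 * (Re c * Re z + Im c * Im z))"
proof -
  obtain x y where z: "z = Complex x y"
    by (cases z)
  have xy: "x\<^sup>2 + y\<^sup>2 = 1"
    using assms by (simp add: z cmod_def)
  have "kernel_field c r z = of_real (r + 2 * (Re c * Re z + Im c * Im z)) * z"
    unfolding kernel_field_def z
    by (simp add: complex_eq_iff power2_eq_square algebra_simps) (use xy in algebra)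
  then show ?thesis
    using assms by auto
qed

lemma kernel_field_in_ker_dbar2: "kernel_field c r \<in> ker_dbar2"
  unfolding ker_dbar2_def
proof (intro CollectI conjI allI impI)
  show "continuous_on (cball 0 1) (kernel_field c r)"
    unfolding kernel_field_def[abs_def] by (intro continuous_intros)
  show "kernel_field c r holomorphic_on ball 0 1"
    unfolding kernel_field_def[abs_def] by (intro holomorphic_intros)
qed (simp add: kernel_field_div_on_circle)

lemma holomorphic_real_valued_imp_constant:
  assumes hol: "f holomorphic_on S" and "open S" "connected S"
    and real: "\<And>z. z \<in> S \<Longrightarrow> Im (f z) = 0"
  shows "f constant_on S"
proof (rule ccontr)
  assume "\<not> f constant_on S"
  then have "open (f ` S)"
    using open_mapping_thm[OF hol] assms by blast
  moreover have "f ` S \<subseteq> {w. \<i> \<bullet> w = 0}"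
    using real by (auto simp: inner_complex_def)
  ultimately have "f ` S \<subseteq> interior {w. \<i> \<bullet> w = 0}"
    by (rule interior_maximal[rotated])
  moreover have "interior {w. \<i> \<bullet> w = 0} = {}"
    by (rule interior_hyperplane) simp
  ultimately have "S = {}"
    by blast
  then show False
    using \<open>\<not> f constant_on S\<close> by (simp add: constant_on_def)
qed

lemma real_on_circle_imp_constant:
  assumes hol: "k holomorphic_on ball 0 1" and cont: "continuous_on (cball 0 1) k"
    and real: "\<And>z. cmod z = 1 \<Longrightarrow> Im (k z) = 0"
  shows "\<exists>r. \<forall>z\<in>cball 0 1. k z = of_real r"
proof -
  have Re_le: "Re (s * k z) \<le> 0" if "z \<in> cball 0 1" "s = \<i> \<or> s = -\<i>" for s z
  proof (rule maximum_real_frontier[where f = "\<lambda>z. s * k z" and S = "cball 0 1"])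
    show "(\<lambda>z. s * k z) holomorphic_on interior (cball 0 1)"
      using hol by (simp add: holomorphic_on_mult holomorphic_on_const)
    show "continuous_on (closure (cball 0 1)) (\<lambda>z. s * k z)"
      using cont by (simp add: continuous_on_mult_left)
    show "Re (s * k w) \<le> 0" if "w \<in> frontier (cball 0 1)" for w
      using that \<open>s = \<i> \<or> s = -\<i>\<close> real[of w] by auto
  qed (use that in simp_all)
  have Im_zero: "Im (k z) = 0" if "z \<in> cball 0 1" for z
    using Re_le[OF that, of \<i>] Re_le[OF that, of "-\<i>"] by simp
  have "k constant_on ball 0 1"
    by (rule holomorphic_real_valued_imp_constant[OF hol open_ball connected_ball]) (simp add: Im_zero)
  then obtain c where c: "\<And>z. z \<in> ball 0 1 \<Longrightarrow> k z = c"
    by (auto simp: constant_on_def)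
  have "k ` closure (ball 0 1) \<subseteq> {c}"
    by (rule image_closure_subset) (use cont c in auto)
  then have kc: "k z = c" if "z \<in> cball 0 1" for z
    using that by (simp add: image_subset_iff)
  have "Im c = 0"
    using Im_zero[of 0] kc[of 0] by simp
  then have "k z = of_real (Re c)" if "z \<in> cball 0 1" for z
    using kc[OF that] by (simp add: complex_eq_iff)
  then show ?thesis
    by blast
qed

lemma holomorphic_factor_zero_disk:
  assumes hol: "g holomorphic_on ball 0 1" and cont: "continuous_on (cball 0 1) g" and "g 0 = 0"
  obtains k where "k holomorphic_on ball 0 1" "continuous_on (cball 0 1) k" "\<And>z. g z = z * k z"
proof
  define k where "k z = (if z = 0 then deriv g 0 else (g z - g 0) / (z - 0))" for z
  show hol_k: "k holomorphic_on ball 0 1"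
    unfolding k_def by (rule pole_lemma[OF hol]) simp
  show "g z = z * k z" for z
    using \<open>g 0 = 0\<close> by (simp add: k_def)
  have "continuous_on (cball 0 (1/2)) k"
    by (rule holomorphic_on_imp_continuous_on[OF holomorphic_on_subset[OF hol_k]]) auto
  moreover have "continuous_on (cball 0 1 - ball 0 (1/2)) k"
  proof (rule continuous_on_eq)
    have "continuous_on (cball 0 1 - ball 0 (1/2)) g"
      by (rule continuous_on_subset[OF cont]) auto
    then show "continuous_on (cball 0 1 - ball 0 (1/2)) (\<lambda>z. g z / z)"
      by (rule continuous_on_divide[OF _ continuous_on_id]) auto
    show "g z / z = k z" if "z \<in> cball 0 1 - ball 0 (1/2)" for z
      using that \<open>g 0 = 0\<close> by (auto simp: k_def)
  qed
  ultimately have "continuous_on (cball 0 (1/2) \<union> (cball 0 1 - ball 0 (1/2))) k"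
    by (rule continuous_on_closed_Un[OF closed_cball closed_Diff[OF closed_cball open_ball]])
  moreover have "cball 0 (1/2) \<union> (cball 0 1 - ball 0 (1/2)) = cball (0::complex) 1"
    by auto
  ultimately show "continuous_on (cball 0 1) k"
    by simp
qed

lemma ker_dbar2_eq_kernel_field:
  assumes "\<xi> \<in> ker_dbar2"
  shows "\<exists>r. \<forall>z\<in>cball 0 1. \<xi> z = kernel_field (\<xi> 0) r z"
proof -
  define g where "g z = \<xi> z - kernel_field (\<xi> 0) 0 z" for z
  have "g holomorphic_on ball 0 1" "continuous_on (cball 0 1) g"
    using assms kernel_field_in_ker_dbar2[of "\<xi> 0" 0] unfolding ker_dbar2_def g_def[abs_def]
    by (auto intro: holomorphic_on_diff continuous_on_diff)
  moreover have "g 0 = 0"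
    by (simp add: g_def kernel_field_def)
  ultimately obtain k where k: "k holomorphic_on ball 0 1" "continuous_on (cball 0 1) k"
    and gk: "\<And>z. g z = z * k z"
    using holomorphic_factor_zero_disk by blast
  have "Im (k z) = 0" if "cmod z = 1" for z
  proof -
    have "z \<noteq> 0"
      using that by auto
    then have "k z = \<xi> z / z - kernel_field (\<xi> 0) 0 z / z"
      using gk[of z] by (simp add: g_def field_simps)
    then show ?thesis
      using assms that by (simp add: ker_dbar2_def complex_is_Real_iff kernel_field_div_on_circle)
  qed
  then obtain r where r: "\<forall>z\<in>cball 0 1. k z = of_real r"
    using real_on_circle_imp_constant[OF k] by blast
  show ?thesis
  proof (intro exI ballI)
    fix z :: complex
    assume "z \<in> cball 0 1"
    have "\<xi> z = kernel_field (\<xi> 0) 0 z + z * k z"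
      using gk[of z] by (simp add: g_def algebra_simps)
    then show "\<xi> z = kernel_field (\<xi> 0) r z"
      using r \<open>z \<in> cball 0 1\<close> by (simp add: kernel_field_def algebra_simps)
  qed
qed

lemma kernel_field_lincomb:
  "kernel_field (a *\<^sub>R c + b *\<^sub>R c') (a * r + b * r') z = a *\<^sub>R kernel_field c r z + b *\<^sub>R kernel_field c' r' z"
  by (simp add: kernel_field_def scaleR_conv_of_real algebra_simps)

lemma DD_coeffs_lincomb:
  "DD_const (a *\<^sub>R A + b *\<^sub>R B) = a *\<^sub>R DD_const A + b *\<^sub>R DD_const B"
  "DD_rot (a *\<^sub>R A + b *\<^sub>R B) = a * DD_rot A + b * DD_rot B"
  by (simp_all add: DD_const_def DD_rot_def complex_eq_iff field_simps)

lemma DD_linear: "DD (a *\<^sub>R A + b *\<^sub>R B) z = a *\<^sub>R DD A z + b *\<^sub>R DD B z"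
  by (simp add: DD_eq_kernel_field DD_coeffs_lincomb kernel_field_lincomb)

lemma kernel_field_coeffs_unique:
  assumes "\<forall>z\<in>cball 0 1. kernel_field c r z = kernel_field c' r' z"
  shows "c = c'" "r = r'"
proof -
  show "c = c'"
    using assms[rule_format, of 0] by (simp add: kernel_field_def)
  then show "r = r'"
    using assms[rule_format, of 1] by (simp add: kernel_field_def)
qed

lemma psl2_entry_2_2: "A \<in> psl2 \<Longrightarrow> A$2$2 = - A$1$1"
  by (simp add: psl2_def trace_def sum_2)

lemma psl2_eqI:
  assumes "A \<in> psl2" "B \<in> psl2" "DD_const A = DD_const B" "DD_rot A = DD_rot B"
  shows "A = B"
proof -
  have "A$i$j = B$i$j" for i j
    using assms psl2_entry_2_2[OF assms(1)] psl2_entry_2_2[OF assms(2)] exhaust_2[of i] exhaust_2[of j]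
    by (auto simp: DD_const_def DD_rot_def complex_eq_iff)
  then show ?thesis
    by (simp add: vec_eq_iff)
qed

lemma DD_inj_on_psl2:
  assumes "A \<in> psl2" "B \<in> psl2" "\<forall>z\<in>cball 0 1. DD A z = DD B z"
  shows "A = B"
  using assms kernel_field_coeffs_unique[of "DD_const A" "DD_rot A" "DD_const B" "DD_rot B"]
  by (auto simp: DD_eq_kernel_field intro: psl2_eqI)

lemma psl2_with_DD_coeffs: "\<exists>A\<in>psl2. DD_const A = c \<and> DD_rot A = r"
proof
  let ?A = "vector [vector [- Im c, (r - 2 * Re c) / 2], vector [(- r - 2 * Re c) / 2, Im c]] :: mat2"
  show "?A \<in> psl2"
    by (simp add: psl2_def trace_def sum_2)
  show "DD_const ?A = c \<and> DD_rot ?A = r"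
    by (simp add: DD_const_def DD_rot_def complex_eq_iff field_simps)
qed

lemma DD_onto_ker_dbar2:
  assumes "\<xi> \<in> ker_dbar2"
  shows "\<exists>A\<in>psl2. \<forall>z\<in>cball 0 1. DD A z = \<xi> z"
proof -
  obtain r where r: "\<forall>z\<in>cball 0 1. \<xi> z = kernel_field (\<xi> 0) r z"
    using ker_dbar2_eq_kernel_field[OF assms] by blast
  obtain A where "A \<in> psl2" and A: "DD_const A = \<xi> 0" "DD_rot A = r"
    using psl2_with_DD_coeffs by blast
  have "DD A z = \<xi> z" if "z \<in> cball 0 1" for z
    using r[rule_format, OF that] by (simp add: DD_eq_kernel_field A)
  with \<open>A \<in> psl2\<close> show ?thesis
    by blast
qed

definition triple :: "'a \<Rightarrow> 'a \<Rightarrow> 'a \<Rightarrow> nat \<Rightarrow> 'a" where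
  "triple x0 x1 x2 k = (if k = 0 then x0 else if k = 1 then x1 else x2)"

definition DD_coords :: "mat2 \<Rightarrow> nat \<Rightarrow> real" where
  "DD_coords A l = (if l = 0 then DD_rot A else if l = 1 then Re (DD_const A) else Im (DD_const A))"

text \<open>The matrices, with respect to the coordinates \<open>DD_coords\<close>, of the differential of
  \<open>g \<mapsto> (g z\<^sub>0, g z\<^sub>1, g z\<^sub>2)\<close> and of
  \<open>\<xi> \<mapsto> (\<xi> p, \<xi> q / q)\<close>.\<close>

definition circle_matrix :: "complex \<Rightarrow> complex \<Rightarrow> complex \<Rightarrow> nat \<Rightarrow> nat \<Rightarrow> real" where
  "circle_matrix z0 z1 z2 k l =
    (if l = 0 then 1 else if l = 1 then 2 * Re (triple z0 z1 z2 k) else 2 * Im (triple z0 z1 z2 k))"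

definition disk_matrix :: "complex \<Rightarrow> complex \<Rightarrow> nat \<Rightarrow> nat \<Rightarrow> real" where
  "disk_matrix p q k l =
    (if k = 0 then (if l = 0 then Re p else if l = 1 then 1 + (Re p)\<^sup>2 - (Im p)\<^sup>2 else 2 * Re p * Im p)
     else if k = 1 then (if l = 0 then Im p else if l = 1 then 2 * Re p * Im p else 1 - (Re p)\<^sup>2 + (Im p)\<^sup>2)
     else (if l = 0 then 1 else if l = 1 then 2 * Re q else 2 * Im q))"

lemma det3_mult: "det3 (\<lambda>k j. L k 0 * U 0 j + L k 1 * U 1 j + L k 2 * U 2 j) = det3 L * det3 U"
  unfolding det3_def by algebra

lemma det3_eq_0_imp_column_relation:
  assumes "det3 M = 0"
  obtains w0 w1 w2 where "w0 \<noteq> 0 \<or> w1 \<noteq> 0 \<or> w2 \<noteq> 0"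
    and "\<And>l. l < 3 \<Longrightarrow> w0 * M l 0 + w1 * M l 1 + w2 * M l 2 = 0"
proof -
  define M' :: "real^3^3" where
    "M' = vector [vector [M 0 0, M 0 1, M 0 2], vector [M 1 0, M 1 1, M 1 2], vector [M 2 0, M 2 1, M 2 2]]"
  have "det M' = 0"
    using assms unfolding det_3 M'_def det3_def by simp algebra
  then have "\<not> (\<exists>B. B ** M' = mat 1)"
    by (simp add: invertible_det_nz invertible_left_inverse[symmetric])
  then obtain w where "w \<noteq> 0" and kernel: "M' *v w = 0"
    using matrix_left_invertible_ker by blast
  then have "w$1 \<noteq> 0 \<or> w$2 \<noteq> 0 \<or> w$3 \<noteq> 0"
    by (auto simp: vec_eq_iff forall_3)
  moreover have "w$1 * M l 0 + w$2 * M l 1 + w$3 * M l 2 = 0" if "l < 3" for l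
  proof -
    have "l = 0 \<or> l = 1 \<or> l = 2"
      using that by auto
    then show ?thesis
      using kernel by (auto simp: vec_eq_iff forall_3 matrix_vector_mult_def sum_3 M'_def mult.commute)
  qed
  ultimately show ?thesis
    using that by blast
qed

lemma det3_DD_coords_ne_0:
  assumes "A0 \<in> psl2" "A1 \<in> psl2" "A2 \<in> psl2" "A0 \<noteq> A1" "A0 \<noteq> A2" "A1 \<noteq> A2"
    and "independent {A0, A1, A2}"
  shows "det3 (\<lambda>l j. DD_coords (triple A0 A1 A2 j) l) \<noteq> 0"
proof
  assume "det3 (\<lambda>l j. DD_coords (triple A0 A1 A2 j) l) = 0"
  then obtain w0 w1 w2 where nontrivial: "w0 \<noteq> 0 \<or> w1 \<noteq> 0 \<or> w2 \<noteq> 0"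
    and rel: "\<And>l. l < 3 \<Longrightarrow> w0 * DD_coords A0 l + w1 * DD_coords A1 l + w2 * DD_coords A2 l = 0"
    by (rule det3_eq_0_imp_column_relation) (simp add: triple_def)
  define B where "B = w0 *\<^sub>R A0 + w1 *\<^sub>R A1 + w2 *\<^sub>R A2"
  have "B \<in> psl2"
    using psl2_entry_2_2[OF assms(1)] psl2_entry_2_2[OF assms(2)] psl2_entry_2_2[OF assms(3)]
    by (simp add: B_def psl2_def trace_def sum_2)
  moreover have "DD_const B = DD_const 0" "DD_rot B = DD_rot 0"
    using rel[of 0] rel[of 1] rel[of 2]
    by (simp_all add: B_def DD_coords_def DD_const_def DD_rot_def complex_eq_iff field_simps)
  ultimately have "B = 0"
    by (intro psl2_eqI) (simp_all add: psl2_def trace_def)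
  then have "dependent {A0, A1, A2}"
    unfolding dependent_finite[OF finite.insertI[OF finite.insertI[OF finite.insertI[OF finite.emptyI]]]]
  proof (intro exI conjI)
    let ?u = "\<lambda>v. if v = A0 then w0 else if v = A1 then w1 else w2"
    show "\<exists>v\<in>{A0, A1, A2}. ?u v \<noteq> 0"
      using nontrivial assms(4-6) by auto
    show "(\<Sum>v\<in>{A0, A1, A2}. ?u v *\<^sub>R v) = 0"
      using assms(4-6) \<open>B = 0\<close> by (simp add: B_def add.assoc)
  qed
  then show False
    using assms(7) by simp
qed

lemma sin_triangle_identity:
  fixes u v :: real
  shows "sin (2 * v) - sin (2 * u + 2 * v) + sin (2 * u) = 4 * sin u * sin v * sin (u + v)"
  unfolding sin_add sin_double cos_double
  using sin_cos_squared_add[of u] sin_cos_squared_add[of v] by algebra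

lemma det3_circle_pos:
  assumes "anticlockwise3 z0 z1 z2"
  shows "0 < det3 (circle_matrix z0 z1 z2)"
proof -
  obtain \<theta> s1 s2 where s: "0 < s1" "s1 < s2" "s2 < 2 * pi"
    and z: "z0 = cis \<theta>" "z1 = cis (\<theta> + s1)" "z2 = cis (\<theta> + s2)"
    using assms unfolding anticlockwise3_def by blast
  define u v where "u = s1 / 2" and "v = (s2 - s1) / 2"
  have s12: "s1 = 2 * u" "s2 = 2 * u + 2 * v"
    by (simp_all add: u_def v_def field_simps)
  have "det3 (circle_matrix z0 z1 z2)
      = 4 * (sin ((\<theta> + s2) - (\<theta> + s1)) - sin ((\<theta> + s2) - \<theta>) + sin ((\<theta> + s1) - \<theta>))"
    unfolding det3_def circle_matrix_def triple_def z sin_diff[of "\<theta> + s2"] sin_diff[of "\<theta> + s1"] by simp algebra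
  also have "\<dots> = 4 * (sin (2 * v) - sin (2 * u + 2 * v) + sin (2 * u))"
    by (simp add: s12)
  also have "\<dots> = 16 * sin u * sin v * sin (u + v)"
    unfolding sin_triangle_identity by simp
  also have "0 < \<dots>"
    using s by (intro mult_pos_pos sin_gt_zero) (auto simp: u_def v_def field_simps)
  finally show ?thesis .
qed

lemma det3_disk_pos:
  assumes "cmod p < 1" "cmod q = 1"
  shows "0 < det3 (disk_matrix p q)"
proof -
  have q: "(Re q)\<^sup>2 + (Im q)\<^sup>2 = 1"
    using assms(2) by (simp add: cmod_power2[symmetric])
  have "det3 (disk_matrix p q) = (1 - (cmod p)\<^sup>2) * (cmod (q - p))\<^sup>2"
    unfolding det3_def disk_matrix_def cmod_power2 using q by simp algebra
  also have "0 < \<dots>"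
    using assms by (auto intro!: mult_pos_pos simp: power_less_one_iff abs_square_less_1)
  finally show ?thesis .
qed

lemma Re_kernel_field:
  "Re (kernel_field c r p) = r * Re p + Re c * (1 + (Re p)\<^sup>2 - (Im p)\<^sup>2) + Im c * (2 * Re p * Im p)"
  by (simp add: kernel_field_def power2_eq_square algebra_simps)

lemma Im_kernel_field:
  "Im (kernel_field c r p) = r * Im p + Re c * (2 * Re p * Im p) + Im c * (1 - (Re p)\<^sup>2 + (Im p)\<^sup>2)"
  by (simp add: kernel_field_def power2_eq_square algebra_simps)

lemma Im_infact_div: "Im (infact A z / w) = Re (DD A z / w)"
proof -
  have "DD A z / w = - (\<i> * (infact A z / w))"
    by (simp add: DD_def tangent_to_F2_def)
  then show ?thesis
    by (simp only: Re_i_times uminus_complex.sel minus_minus)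
qed

lemma psl_pos_iff_det3_DD_coords_neg:
  assumes "anticlockwise3 z0 z1 z2"
  shows "psl_pos z0 z1 z2 A0 A1 A2 \<longleftrightarrow> det3 (\<lambda>l j. DD_coords (triple A0 A1 A2 j) l) < 0"
proof -
  let ?z = "triple z0 z1 z2" and ?V = "circle_matrix z0 z1 z2"
  let ?U = "\<lambda>l j. DD_coords (triple A0 A1 A2 j) l"
  have circle: "cmod (?z k) = 1" for k
    using assms by (auto simp: anticlockwise3_def triple_def)
  have "psl_pos z0 z1 z2 A0 A1 A2 \<longleftrightarrow> det3 (\<lambda>k j. Im (infact (triple A0 A1 A2 j) (?z k) / ?z k)) < 0"
    unfolding psl_pos_def Let_def triple_def ..
  also have "(\<lambda>k j. Im (infact (triple A0 A1 A2 j) (?z k) / ?z k))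
      = (\<lambda>k j. ?V k 0 * ?U 0 j + ?V k 1 * ?U 1 j + ?V k 2 * ?U 2 j)"
    by (simp add: fun_eq_iff Im_infact_div DD_eq_kernel_field kernel_field_div_on_circle[OF circle]
        circle_matrix_def DD_coords_def algebra_simps)
  also have "det3 \<dots> = det3 ?V * det3 ?U"
    by (rule det3_mult)
  also have "\<dots> < 0 \<longleftrightarrow> det3 ?U < 0"
    using det3_circle_pos[OF assms] by (simp add: mult_less_0_iff)
  finally show ?thesis .
qed

lemma ker_pos_iff_det3_DD_coords_pos:
  assumes "p \<in> ball 0 1" "cmod q = 1"
  shows "ker_pos p q (DD A0) (DD A1) (DD A2) \<longleftrightarrow> 0 < det3 (\<lambda>l j. DD_coords (triple A0 A1 A2 j) l)"
proof -
  let ?A = "triple A0 A1 A2" and ?U = "\<lambda>l j. DD_coords (triple A0 A1 A2 j) l"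
  let ?L = "disk_matrix p q"
  have "ker_pos p q (DD A0) (DD A1) (DD A2) \<longleftrightarrow> 0 < det3 (\<lambda>k j.
      if k = 0 then Re (DD (?A j) p) else if k = 1 then Im (DD (?A j) p) else Re (DD (?A j) q / q))"
  proof -
    have "(if j = 0 then DD A0 else if j = 1 then DD A1 else DD A2) = DD (?A j)" for j
      by (simp add: triple_def)
    then show ?thesis
      unfolding ker_pos_def Let_def by presburger
  qed
  also have "(\<lambda>k j. if k = 0 then Re (DD (?A j) p) else if k = 1 then Im (DD (?A j) p)
      else Re (DD (?A j) q / q)) = (\<lambda>k j. ?L k 0 * ?U 0 j + ?L k 1 * ?U 1 j + ?L k 2 * ?U 2 j)"
    by (simp add: fun_eq_iff DD_eq_kernel_field Re_kernel_field Im_kernel_field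
        kernel_field_div_on_circle[OF assms(2)] disk_matrix_def DD_coords_def algebra_simps)
  also have "det3 \<dots> = det3 ?L * det3 ?U"
    by (rule det3_mult)
  also have "0 < \<dots> \<longleftrightarrow> 0 < det3 ?U"
    using det3_disk_pos[of p q] assms by (simp add: zero_less_mult_iff)
  finally show ?thesis .
qed

lemma DD_in_ker_dbar2: "DD A \<in> ker_dbar2"
  by (simp add: DD_eq_kernel_field kernel_field_in_ker_dbar2)

lemma DD_orientation_reversing:
  assumes "anticlockwise3 z0 z1 z2" "p \<in> ball 0 1" "cmod q = 1"
    and "A0 \<in> psl2" "A1 \<in> psl2" "A2 \<in> psl2" "A0 \<noteq> A1" "A0 \<noteq> A2" "A1 \<noteq> A2"
    and "independent {A0, A1, A2}"
  shows "psl_pos z0 z1 z2 A0 A1 A2 \<longleftrightarrow> \<not> ker_pos p q (DD A0) (DD A1) (DD A2)"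
  using psl_pos_iff_det3_DD_coords_neg[OF assms(1), of A0 A1 A2]
    ker_pos_iff_det3_DD_coords_pos[OF assms(2,3), of A0 A1 A2]
    det3_DD_coords_ne_0[OF assms(4-10)]
  by linarith

theorem lemma5p35:
  shows "(\<forall>A\<in>psl2. DD A \<in> ker_dbar2)
    \<and> (\<forall>A\<in>psl2. \<forall>B\<in>psl2. \<forall>a b. \<forall>z\<in>cball 0 1.
          DD (a *\<^sub>R A + b *\<^sub>R B) z = a *\<^sub>R DD A z + b *\<^sub>R DD B z)
    \<and> (\<forall>A\<in>psl2. \<forall>B\<in>psl2. (\<forall>z\<in>cball 0 1. DD A z = DD B z) \<longrightarrow> A = B)
    \<and> (\<forall>\<xi>\<in>ker_dbar2. \<exists>A\<in>psl2. \<forall>z\<in>cball 0 1. DD A z = \<xi> z)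
    \<and> (\<forall>z0 z1 z2 p q A0 A1 A2.
          anticlockwise3 z0 z1 z2 \<and> p \<in> ball 0 1 \<and> cmod q = 1 \<and>
          A0 \<in> psl2 \<and> A1 \<in> psl2 \<and> A2 \<in> psl2 \<and>
          A0 \<noteq> A1 \<and> A0 \<noteq> A2 \<and> A1 \<noteq> A2 \<and> independent {A0, A1, A2}
          \<longrightarrow> (psl_pos z0 z1 z2 A0 A1 A2 \<longleftrightarrow> \<not> ker_pos p q (DD A0) (DD A1) (DD A2)))"
  using DD_in_ker_dbar2 DD_linear DD_inj_on_psl2 DD_onto_ker_dbar2 DD_orientation_reversing
  by blast

end
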